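(* If $R$ is a closed $\forall^+$ type, then for every environment $\gamma$, $\llbracket R\rrbracket_\gamma$ is a partial equivalence relation (symmetric and transitive).
   Context: Terms are those of the pure untyped $\lambda$-calculus, up to $\alpha$-equivalence; $=_{\beta\eta}$ is $\beta\eta$-convertibility. Relational types: $R ::= X \mid R\to R' \mid \forall X.R \mid R^{\cup} \mid R\cdot R' \mid t$ (last form: promotion of a term). A relation on terms is $\beta\eta$-closed if closed under replacing either related term by a $\beta\eta$-equal one; $\mathcal{R}$ is the set of such relations; environments $\gamma$ map finitely many type variables to $\mathcal{R}$. Interpretation: $\llbracket X\rrbracket_\gamma=\gamma(X)$; $t\,\llbracket R\to R'\rrbracket_\gamma\,t'$ iff for all $a,a'$ with $a\,\llbracket R\rrbracket_\gamma\,a'$, $t\,a\,\llbracket R'\rrbracket_\gamma\,t'\,a'$; $\llbracket \forall X.R\rrbracket_\gamma=\bigcap_{r\in\mathcal{R}}\llbracket R\rrbracket_{\gamma[X\mapsto r]}$; $t\,\llbracket R^\cup\rrbracket_\gamma\,t'$ iff $t'\,\llbracket R\rrbracket_\gamma\,t$; $t\,\llbracket R\cdot R'\rrbracket_\gamma\,t'$ iff $\exists t''$, $t\,\llbracket R\rrbracket_\gamma\,t''$ and $t''\,\llbracket R'\rrbracket_\gamma\,t'$; $\llbracket \hat t\rrbracket_\gamma=\{(t,t')\mid \hat t\,t=_{\beta\eta}t'\}$. Polarities $p\in\{+,-\}$, $\bar p$ the other; $\forall^p$: type variables are $\forall^p$; if $R$ is $\forall^{\bar p}$ and $R'$ is $\forall^p$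 then $R\to R'$ is $\forall^p$; if $R$ is $\forall^+$ then $\forall X.R$ is $\forall^+$; if $R$ is $\forall^p$ then so is $R^\cup$; a promotion of $t$ with $t=_{\beta\eta}\lambda x.x$ is $\forall^p$. *)

theory Defs
  imports Main
begin

section \<open>Pure untyped lambda terms (de Bruijn indices, so alpha-equivalence is equality)\<close>

datatype trm = Var nat | App trm trm | Lam trm

primrec lift :: "trm \<Rightarrow> nat \<Rightarrow> trm" where
  "lift (Var i) k = (if i < k then Var i else Var (Suc i))"
| "lift (App s t) k = App (lift s k) (lift t k)"
| "lift (Lam s) k = Lam (lift s (Suc k))"

primrec subst :: "trm \<Rightarrow> trm \<Rightarrow> nat \<Rightarrow> trm" where
  "subst (Var i) u k = (if k < i then Var (i - 1) else if i = k then u else Var i)"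
| "subst (App s t) u k = App (subst s u k) (subst t u k)"
| "subst (Lam s) u k = Lam (subst s (lift u 0) (Suc k))"

inductive bestep :: "trm \<Rightarrow> trm \<Rightarrow> bool" where
  beta: "bestep (App (Lam s) t) (subst s t 0)"
| eta: "bestep (Lam (App (lift s 0) (Var 0))) s"
| appL: "bestep s s' \<Longrightarrow> bestep (App s t) (App s' t)"
| appR: "bestep t t' \<Longrightarrow> bestep (App s t) (App s t')"
| abs: "bestep s s' \<Longrightarrow> bestep (Lam s) (Lam s')"

definition beq :: "trm \<Rightarrow> trm \<Rightarrow> bool" where
  "beq = equivclp bestep"

type_synonym rel = "trm \<Rightarrow> trm \<Rightarrow> bool"

definition be_closed :: "rel \<Rightarrow> bool" where
  "be_closed r \<longleftrightarrow> (\<forall>t t' u u'. r t t' \<and> beq t u \<and> beq t' u' \<longrightarrow> r u u')"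

datatype rty =
    TVar string
  | Arr rty rty
  | All string rty
  | Cnv rty
  | Cmp rty rty
  | Prom trm

primrec ftv :: "rty \<Rightarrow> string set" where
  "ftv (TVar X) = {X}"
| "ftv (Arr R R') = ftv R \<union> ftv R'"
| "ftv (All X R) = ftv R - {X}"
| "ftv (Cnv R) = ftv R"
| "ftv (Cmp R R') = ftv R \<union> ftv R'"
| "ftv (Prom t) = {}"

definition closed_rty :: "rty \<Rightarrow> bool" where
  "closed_rty R \<longleftrightarrow> ftv R = {}"

text \<open>Environments: finite partial maps from type variables to beta-eta-closed relations.
  An unmapped variable is interpreted as the empty relation (irrelevant for closed types).\<close>
type_synonym env = "string \<rightharpoonup> rel"

definition env_ok :: "env \<Rightarrow> bool" where
  "env_ok \<gamma> \<longleftrightarrow> finite (dom \<gamma>) \<and> (\<forall>r \<in> ran \<gamma>. be_closed r)"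

primrec interp :: "env \<Rightarrow> rty \<Rightarrow> rel" where
  "interp \<gamma> (TVar X) = (case \<gamma> X of Some r \<Rightarrow> r | None \<Rightarrow> (\<lambda>_ _. False))"
| "interp \<gamma> (Arr R R') = (\<lambda>t t'. \<forall>a a'. interp \<gamma> R a a' \<longrightarrow> interp \<gamma> R' (App t a) (App t' a'))"
| "interp \<gamma> (All X R) = (\<lambda>t t'. \<forall>r. be_closed r \<longrightarrow> interp (\<gamma>(X \<mapsto> r)) R t t')"
| "interp \<gamma> (Cnv R) = (\<lambda>t t'. interp \<gamma> R t' t)"
| "interp \<gamma> (Cmp R R') = (\<lambda>t t'. \<exists>t''. interp \<gamma> R t t'' \<and> interp \<gamma> R' t'' t')"
| "interp \<gamma> (Prom s) = (\<lambda>t t'. beq (App s t) t')"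

text \<open>Polarity: True = +, False = -.\<close>
inductive forallp :: "bool \<Rightarrow> rty \<Rightarrow> bool" where
  var: "forallp p (TVar X)"
| arr: "forallp (\<not> p) R \<Longrightarrow> forallp p R' \<Longrightarrow> forallp p (Arr R R')"
| all: "forallp True R \<Longrightarrow> forallp True (All X R)"
| cnv: "forallp p R \<Longrightarrow> forallp p (Cnv R)"
| prom: "beq t (Lam (Var 0)) \<Longrightarrow> forallp p (Prom t)"

end

theory Submission
  imports Defs
begin

(* Identity extension: when every free type variable is read as beta-eta convertibility,
   a forall^+ type denotes a subrelation of convertibility and a forall^- type a superrelation.
   The arrow case needs extensionality (two terms agreeing on fresh variables are
   eta-convertible), the quantifier case instantiates the bound variable by convertibility,
   and a promoted identity acts as convertibility. For a closed type the environment does not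
   matter, so a closed forall^+ type always denotes a subrelation of convertibility. Since every
   type denotes a beta-eta-closed relation, and such a relation contained in convertibility can
   exchange related terms, it is symmetric and transitive. *)

lemma lift_lift: "i < k + 1 \<Longrightarrow> lift (lift t i) (Suc k) = lift (lift t k) i"
  by (induct t arbitrary: i k) auto

lemma lift_subst_ge: "j < Suc i \<Longrightarrow> lift (subst t s j) i = subst (lift t (Suc i)) (lift s i) j"
  by (induct t arbitrary: i j s) (simp_all add: diff_Suc split: nat.split, auto simp: lift_lift)

lemma lift_subst_le: "i < j + 1 \<Longrightarrow> lift (subst t s j) i = subst (lift t i) (lift s i) (j + 1)"
  by (induct t arbitrary: i j s) (auto simp: lift_lift)

lemma subst_lift: "subst (lift t k) s k = t"
  by (induct t arbitrary: k s) auto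

lemma subst_subst:
  "i < Suc j \<Longrightarrow> subst (subst t (lift v i) (Suc j)) (subst u v j) i = subst (subst t u i) v j"
proof (induct t arbitrary: i j u v)
  case (Lam t)
  have "subst (subst t (lift (lift v 0) (Suc i)) (Suc (Suc j))) (subst (lift u 0) (lift v 0) (Suc j)) (Suc i)
        = subst (subst t (lift u 0) (Suc i)) (lift v 0) (Suc j)"
    using Lam by simp
  then show ?case using Lam(2) by (simp add: lift_lift lift_subst_le)
qed (auto simp: subst_lift)

lemma bestep_lift: "bestep s s' \<Longrightarrow> bestep (lift s k) (lift s' k)"
proof (induct arbitrary: k rule: bestep.induct)
  case (beta s t)
  show ?case using bestep.beta[of "lift s (Suc k)" "lift t k"] by (simp add: lift_subst_ge)
next
  case (eta s)
  show ?case using bestep.eta[of "lift s k"] by (simp add: lift_lift)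
qed (auto intro: bestep.intros)

lemma bestep_subst: "bestep s s' \<Longrightarrow> bestep (subst s u k) (subst s' u k)"
proof (induct arbitrary: k u rule: bestep.induct)
  case (beta s t)
  show ?case using bestep.beta[of "subst s (lift u 0) (Suc k)" "subst t u k"]
    by (simp add: subst_subst)
next
  case (eta s)
  show ?case using bestep.eta[of "subst s u k"] by (simp add: lift_subst_le)
qed (auto intro: bestep.intros)

lemma beq_refl [simp]: "beq s s"
  by (simp add: beq_def)

lemma beq_sym: "beq s t \<Longrightarrow> beq t s"
  by (simp add: beq_def equivclp_sym)

lemma beq_trans: "beq s t \<Longrightarrow> beq t u \<Longrightarrow> beq s u"
  unfolding beq_def by (rule equivclp_trans)

lemma conversep_beq [simp]: "beq\<inverse>\<inverse> = beq"
  using symp_equivclp[of bestep] by (simp add: beq_def symp_conv_conversep_eq)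

lemma beq_step: "bestep s t \<Longrightarrow> beq s t"
  unfolding beq_def by (rule r_into_equivclp)

lemma beq_map:
  assumes "\<And>s s'. bestep s s' \<Longrightarrow> bestep (f s) (f s')" and "beq s s'"
  shows "beq (f s) (f s')"
  using assms(2) unfolding beq_def
  by (induction rule: equivclp_induct) (auto intro: equivclp_into_equivclp assms(1))

lemma beq_App: "beq s s' \<Longrightarrow> beq t t' \<Longrightarrow> beq (App s t) (App s' t')"
  using beq_map[of "\<lambda>x. App x t" s s'] beq_map[of "\<lambda>x. App s' x" t t']
  by (blast intro: bestep.appL bestep.appR beq_trans)

lemma beq_Lam: "beq s s' \<Longrightarrow> beq (Lam s) (Lam s')"
  using beq_map[of Lam] by (auto intro: bestep.abs)

lemma beq_App_identity: "beq s (Lam (Var 0)) \<Longrightarrow> beq (App s t) t"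
  using beq_App[of s "Lam (Var 0)" t t] beq_step[OF bestep.beta[of "Var 0" t]]
  by (auto intro: beq_trans)

lemma be_closed_beq: "be_closed beq"
  unfolding be_closed_def by (meson beq_sym beq_trans)

primrec free_below :: "nat \<Rightarrow> trm \<Rightarrow> bool" where
  "free_below k (Var i) = (i < k)"
| "free_below k (App s t) = (free_below k s \<and> free_below k t)"
| "free_below k (Lam s) = free_below (Suc k) s"

lemma free_below_mono: "free_below k t \<Longrightarrow> k \<le> m \<Longrightarrow> free_below m t"
  by (induct t arbitrary: k m) auto

lemma free_below_exists: "\<exists>k. free_below k t"
proof (induct t)
  case (Var i)
  show ?case by (auto intro: exI[of _ "Suc i"])
next
  case (App s t)
  then obtain a b where "free_below a s" "free_below b t" by auto
  then show ?case by (auto intro!: exI[of _ "max a b"] intro: free_below_mono)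
qed (meson free_below.simps(3) free_below_mono le_SucI order.refl)

lemma subst_free_below: "free_below k s \<Longrightarrow> subst s u k = s"
  by (induct s arbitrary: k u) auto

lemma free_below_lift: "free_below k s \<Longrightarrow> free_below (Suc k) (lift s j)"
  by (induct s arbitrary: k j) auto

lemma beq_extensional:
  assumes "\<And>n. beq (App t (Var n)) (App t' (Var n))"
  shows "beq t t'"
proof -
  obtain n where "free_below n t" "free_below n t'"
    using free_below_exists free_below_mono by (metis max.cobounded1 max.cobounded2)
  then have fresh: "subst (lift t 0) (Var 0) (Suc n) = lift t 0"
                   "subst (lift t' 0) (Var 0) (Suc n) = lift t' 0"
    by (auto intro: subst_free_below free_below_lift)
  \<comment> \<open>shift, then rename the fresh variable Suc n into the bound variable 0\<close>
  have "beq (subst (lift (App t (Var n)) 0) (Var 0) (Suc n))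
            (subst (lift (App t' (Var n)) 0) (Var 0) (Suc n))"
    using beq_map[of "\<lambda>x. subst (lift x 0) (Var 0) (Suc n)"] assms bestep_lift bestep_subst
    by blast
  then have "beq (Lam (App (lift t 0) (Var 0))) (Lam (App (lift t' 0) (Var 0)))"
    using fresh by (simp add: beq_Lam)
  then show ?thesis
    by (meson beq_step beq_sym beq_trans bestep.eta)
qed

lemma interp_identity_extension:
  assumes "forallp p R" and "\<forall>X \<in> ftv R. \<gamma> X = Some beq"
  shows "if p then interp \<gamma> R \<le> beq else beq \<le> interp \<gamma> R"
  using assms
proof (induction arbitrary: \<gamma> rule: forallp.induct)
  case (arr p R R')
  then have IH: "if p then beq \<le> interp \<gamma> R else interp \<gamma> R \<le> beq"
                "if p then interp \<gamma> R' \<le> beq else beq \<le> interp \<gamma> R'"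
    by (auto split: if_splits)
  show ?case
  proof (cases p)
    case True
    have "beq t t'" if "interp \<gamma> (Arr R R') t t'" for t t'
    proof (rule beq_extensional)
      fix n
      have "interp \<gamma> R (Var n) (Var n)" using IH(1) True by (simp add: le_fun_def)
      then show "beq (App t (Var n)) (App t' (Var n))" using that IH(2) True by auto
    qed
    then show ?thesis using True by auto
  next
    case False
    have "interp \<gamma> (Arr R R') t t'" if "beq t t'" for t t'
    proof (simp, intro allI impI)
      fix a a'
      assume "interp \<gamma> R a a'"
      then have "beq a a'" using IH(1) False by auto
      then show "interp \<gamma> R' (App t a) (App t' a')"
        using IH(2) False that by (simp add: le_fun_def beq_App)
    qed
    then show ?thesis using False by auto
  qed
next
  case (all R X)
  then have "interp (\<gamma>(X \<mapsto> beq)) R \<le> beq" by auto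
  then show ?case using be_closed_beq by auto
next
  case (cnv p R)
  then have "if p then interp \<gamma> R \<le> beq else beq \<le> interp \<gamma> R" by simp
  moreover have "interp \<gamma> (Cnv R) = (interp \<gamma> R)\<inverse>\<inverse>" by (simp add: fun_eq_iff)
  ultimately show ?case by (metis conversep_beq conversep_mono)
next
  case (prom t p)
  have "beq (App t u) u" for u using prom.hyps by (rule beq_App_identity)
  then show ?case by (simp add: le_fun_def) (metis beq_sym beq_trans)
qed simp

lemma be_closedI:
  "(\<And>t t' u u'. r t t' \<Longrightarrow> beq t u \<Longrightarrow> beq t' u' \<Longrightarrow> r u u') \<Longrightarrow> be_closed r"
  unfolding be_closed_def by blast

lemma be_closedD: "be_closed r \<Longrightarrow> r t t' \<Longrightarrow> beq t u \<Longrightarrow> beq t' u' \<Longrightarrow> r u u'"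
  unfolding be_closed_def by blast

lemma be_closed_interp:
  assumes "\<forall>r \<in> ran \<gamma>. be_closed r"
  shows "be_closed (interp \<gamma> R)"
  using assms
proof (induction R arbitrary: \<gamma>)
  case (TVar X)
  then show ?case by (fastforce simp: be_closed_def ran_def split: option.split)
next
  case (Arr R R')
  then have closed: "be_closed (interp \<gamma> R')" by blast
  show ?case
  proof (rule be_closedI)
    fix t t' u u'
    assume rel: "interp \<gamma> (Arr R R') t t'" and "beq t u" "beq t' u'"
    show "interp \<gamma> (Arr R R') u u'"
    proof (simp, intro allI impI)
      fix a a'
      assume "interp \<gamma> R a a'"
      then have "interp \<gamma> R' (App t a) (App t' a')" using rel by simp
      then show "interp \<gamma> R' (App u a) (App u' a')"
        by (rule be_closedD[OF closed]) (simp_all add: beq_App \<open>beq t u\<close> \<open>beq t' u'\<close>)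
    qed
  qed
next
  case (All X R)
  have "be_closed (interp (\<gamma>(X \<mapsto> r)) R)" if "be_closed r" for r
  proof (rule All.IH)
    show "\<forall>q \<in> ran (\<gamma>(X \<mapsto> r)). be_closed q"
      using All.prems that by (auto simp: ran_def)
  qed
  then show ?case by (auto intro!: be_closedI dest: be_closedD)
next
  case (Cnv R)
  then show ?case by (auto intro!: be_closedI dest: be_closedD)
next
  case (Cmp R R')
  then have closed: "be_closed (interp \<gamma> R)" "be_closed (interp \<gamma> R')" by blast+
  show ?case
  proof (rule be_closedI)
    fix t t' u u'
    assume "interp \<gamma> (Cmp R R') t t'" and "beq t u" "beq t' u'"
    then obtain m where "interp \<gamma> R t m" "interp \<gamma> R' m t'" by auto
    then have "interp \<gamma> R u m" "interp \<gamma> R' m u'"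
      using be_closedD[OF closed(1)] be_closedD[OF closed(2)] \<open>beq t u\<close> \<open>beq t' u'\<close> beq_refl
      by blast+
    then show "interp \<gamma> (Cmp R R') u u'" by auto
  qed
next
  case (Prom s)
  show ?case by (rule be_closedI, simp) (metis beq_App beq_refl beq_sym beq_trans)
qed

lemma symp_transp_if_be_closed_le_beq:
  assumes "be_closed r" and "r \<le> beq"
  shows "symp r \<and> transp r"
proof
  show "symp r"
    by (rule sympI) (use assms in \<open>auto dest: be_closedD intro: beq_sym\<close>)
  show "transp r"
  proof (rule transpI)
    fix x y z
    assume "r x y" and "r y z"
    then have "beq y z" using assms(2) by auto
    then show "r x z" using be_closedD[OF assms(1) \<open>r x y\<close>] by simp
  qed
qed

theorem mainTheorem12:
  assumes "closed_rty R" and "forallp True R" and "env_ok \<gamma>"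
  shows "symp (interp \<gamma> R) \<and> transp (interp \<gamma> R)"
proof (rule symp_transp_if_be_closed_le_beq)
  show "be_closed (interp \<gamma> R)"
    using assms(3) by (simp add: env_ok_def be_closed_interp)
  show "interp \<gamma> R \<le> beq"
    using interp_identity_extension[OF assms(2)] assms(1) by (simp add: closed_rty_def)
qed

end
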